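(* Let $\varphi$ be a closed recHML formula and $m$ a monitor. If $m$ is sound and complete for $\varphi$ over finfinite traces, then $[\![\varphi]\!]_F=\mathrm{Act}^\omega\cup\mathrm{Act}^*$ or $[\![\varphi]\!]_F=\emptyset$.
   Context: Fix a finite set $\mathrm{Act}$ of actions, $\tau\notin\mathrm{Act}$. recHML formulae: $\varphi::=\mathrm{tt}\mid\mathrm{ff}\mid\varphi\vee\varphi\mid\varphi\wedge\varphi\mid\langle A\rangle\varphi\mid[A]\varphi\mid\min X.\varphi\mid\max X.\varphi\mid X$ with $A\subseteq\mathrm{Act}$; fixpoints bind variables; formulae are guarded. Finfinite traces are $\mathrm{Fin}=\mathrm{Act}^\omega\cup\mathrm{Act}^*$. The finfinite semantics $[\![\varphi,\sigma]\!]_F\subseteq\mathrm{Fin}$ (with $\sigma$ mapping variables to subsets of $\mathrm{Fin}$) is: $[\![\mathrm{tt}]\!]_F=\mathrm{Fin}$, $[\![\mathrm{ff}]\!]_F=\emptyset$, $\vee,\wedge$ are union and intersection, $[\![\langle A\rangle\varphi,\sigma]\!]_F=\{ag\mid a\in A, g\in[\![\varphi,\sigma]\!]_F\}$, $[\![[A]\varphi,\sigma]\!]_F=\{g\mid\forall a\in A,\forall g'.\ g=ag'\Rightarrow g'\in[\![\varphi,\sigma]\!]_F\}$, $[\![\min X.\varphi,\sigma]\!]_F=\bigcap\{S\mid[\![\varphi,\sigma[X\mapsto S]]\!]_F\subseteq S\}$, $[\![\max X.\varphi,\sigma]\!]_F=\bigcup\{S\mid S\subseteq[\![\varphi,\sigma[X\mapsto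 S]]\!]_F\}$, $[\![X,\sigma]\!]_F=\sigma(X)$; for closed formulae $\sigma$ is omitted. Monitors: $m,n::=v\mid a.m\mid m+n\mid\mathrm{rec}\,x.m\mid x\mid m\otimes n\mid m\oplus n$, verdicts $v::=\mathrm{end}\mid\mathrm{no}\mid\mathrm{yes}$, with the standard transition rules in which verdicts are irrevocable ($v\xrightarrow{a}v$ and no other transitions from verdicts). A monitor $m$ rejects (resp. accepts) a finite trace $s$ if $m\overset{s}{\Longrightarrow}\mathrm{no}$ (resp. $\mathrm{yes}$) in the weak transition relation (this coincides with the instrumentation-based definition), and rejects (accepts) $g\in\mathrm{Fin}$ if it rejects (accepts) some finite prefix of $g$. $m$ is sound for $\varphi$ over finfinite traces if for all $g\in\mathrm{Fin}$, $m$ rejects $g$ implies $g\notin[\![\varphi]\!]_F$, and $m$ accepts $g$ implies $g\in[\![\varphi]\!]_F$; it is violation-complete if $g\notin[\![\varphi]\!]_F$ implies $m$ rejects $g$, satisfaction-complete if $g\in[\![\varphi]\!]_F$ implies $m$ accepts $g$, and complete if both. *)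

theory Defs
  imports Main
begin

datatype 'a ftrace = FinT "'a list" | InfT "nat \<Rightarrow> 'a"

fun tcons :: "'a \<Rightarrow> 'a ftrace \<Rightarrow> 'a ftrace" where
  "tcons a (FinT s) = FinT (a # s)"
| "tcons a (InfT f) = InfT (case_nat a f)"

fun fprefix :: "'a list \<Rightarrow> 'a ftrace \<Rightarrow> bool" where
  "fprefix t (FinT s) = (\<exists>u. s = t @ u)"
| "fprefix t (InfT f) = (t = map f [0..<length t])"

type_synonym var = nat

datatype 'a form =
    TT | FF
  | Or "'a form" "'a form"
  | And "'a form" "'a form"
  | Dia "'a set" "'a form"
  | Box "'a set" "'a form"
  | Min var "'a form"
  | Max var "'a form"
  | Var var

fun fv :: "'a form \<Rightarrow> var set" where
  "fv TT = {}" | "fv FF = {}"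
| "fv (Or p q) = fv p \<union> fv q" | "fv (And p q) = fv p \<union> fv q"
| "fv (Dia A p) = fv p" | "fv (Box A p) = fv p"
| "fv (Min X p) = fv p - {X}" | "fv (Max X p) = fv p - {X}"
| "fv (Var X) = {X}"

definition closed :: "'a form \<Rightarrow> bool" where
  "closed p \<longleftrightarrow> fv p = {}"

text \<open>Guardedness: every occurrence of a fixpoint-bound variable in the body of
its binder lies within the scope of a modality. U collects the bound variables
not yet guarded.\<close>
fun gd :: "var set \<Rightarrow> 'a form \<Rightarrow> bool" where
  "gd U TT = True" | "gd U FF = True"
| "gd U (Or p q) = (gd U p \<and> gd U q)" | "gd U (And p q) = (gd U p \<and> gd U q)"
| "gd U (Dia A p) = gd {} p" | "gd U (Box A p) = gd {} p"
| "gd U (Min X p) = gd (insert X U) p" | "gd U (Max X p) = gd (insert X U) p"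
| "gd U (Var X) = (X \<notin> U)"

definition guarded :: "'a form \<Rightarrow> bool" where
  "guarded p \<longleftrightarrow> gd {} p"

text \<open>Finfinite semantics. Note lfp F = Inter {S. F S <= S} and
gfp F = Union {S. S <= F S} by definition in HOL.\<close>
fun sem :: "'a form \<Rightarrow> (var \<Rightarrow> 'a ftrace set) \<Rightarrow> 'a ftrace set" where
  "sem TT \<sigma> = UNIV"
| "sem FF \<sigma> = {}"
| "sem (Or p q) \<sigma> = sem p \<sigma> \<union> sem q \<sigma>"
| "sem (And p q) \<sigma> = sem p \<sigma> \<inter> sem q \<sigma>"
| "sem (Dia A p) \<sigma> = {tcons a g | a g. a \<in> A \<and> g \<in> sem p \<sigma>}"
| "sem (Box A p) \<sigma> = {g. \<forall>a\<in>A. \<forall>g'. g = tcons a g' \<longrightarrow> g' \<in> sem p \<sigma>}"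
| "sem (Min X p) \<sigma> = \<Inter>{S. sem p (\<sigma>(X := S)) \<subseteq> S}"
| "sem (Max X p) \<sigma> = \<Union>{S. S \<subseteq> sem p (\<sigma>(X := S))}"
| "sem (Var X) \<sigma> = \<sigma> X"

text \<open>Semantics of closed formulae (the environment is irrelevant).\<close>
definition semF :: "'a form \<Rightarrow> 'a ftrace set" where
  "semF p = sem p (\<lambda>_. {})"

datatype verdict = End | No | Yes

datatype 'a mon =
    Verd verdict
  | Pre 'a "'a mon"
  | Sum "'a mon" "'a mon"
  | Rec var "'a mon"
  | MVar var
  | Conj "'a mon" "'a mon"
  | Disj "'a mon" "'a mon"

fun msubst :: "'a mon \<Rightarrow> var \<Rightarrow> 'a mon \<Rightarrow> 'a mon" where
  "msubst (Verd v) x n = Verd v"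
| "msubst (Pre a m) x n = Pre a (msubst m x n)"
| "msubst (Sum m1 m2) x n = Sum (msubst m1 x n) (msubst m2 x n)"
| "msubst (Rec y m) x n = (if y = x then Rec y m else Rec y (msubst m x n))"
| "msubst (MVar y) x n = (if y = x then n else MVar y)"
| "msubst (Conj m1 m2) x n = Conj (msubst m1 x n) (msubst m2 x n)"
| "msubst (Disj m1 m2) x n = Disj (msubst m1 x n) (msubst m2 x n)"

text \<open>Labelled transitions; the label None is the silent action tau.\<close>
inductive step :: "'a mon \<Rightarrow> 'a option \<Rightarrow> 'a mon \<Rightarrow> bool" where
  mAct: "step (Pre a m) (Some a) m"
| mRec: "step (Rec x m) None (msubst m x (Rec x m))"
| mSelL: "step m mu m' \<Longrightarrow> step (Sum m n) mu m'"
| mSelR: "step n mu n' \<Longrightarrow> step (Sum m n) mu n'"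
| mVerd: "step (Verd v) (Some a) (Verd v)"
| mParC: "step m (Some a) m' \<Longrightarrow> step n (Some a) n' \<Longrightarrow> step (Conj m n) (Some a) (Conj m' n')"
| mParD: "step m (Some a) m' \<Longrightarrow> step n (Some a) n' \<Longrightarrow> step (Disj m n) (Some a) (Disj m' n')"
| mTauLC: "step m None m' \<Longrightarrow> step (Conj m n) None (Conj m' n)"
| mTauRC: "step n None n' \<Longrightarrow> step (Conj m n) None (Conj m n')"
| mTauLD: "step m None m' \<Longrightarrow> step (Disj m n) None (Disj m' n)"
| mTauRD: "step n None n' \<Longrightarrow> step (Disj m n) None (Disj m n')"
| mVrC1L: "step (Conj (Verd Yes) n) None n"
| mVrC1R: "step (Conj m (Verd Yes)) None m"
| mVrC2L: "step (Conj (Verd No) n) None (Verd No)"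
| mVrC2R: "step (Conj m (Verd No)) None (Verd No)"
| mVrD1L: "step (Disj (Verd No) n) None n"
| mVrD1R: "step (Disj m (Verd No)) None m"
| mVrD2L: "step (Disj (Verd Yes) n) None (Verd Yes)"
| mVrD2R: "step (Disj m (Verd Yes)) None (Verd Yes)"
| mVrEC: "step (Conj (Verd End) (Verd End)) None (Verd End)"
| mVrED: "step (Disj (Verd End) (Verd End)) None (Verd End)"

inductive wstep :: "'a mon \<Rightarrow> 'a list \<Rightarrow> 'a mon \<Rightarrow> bool" where
  wRefl: "wstep m [] m"
| wTau: "step m None m' \<Longrightarrow> wstep m' s n \<Longrightarrow> wstep m s n"
| wAct: "step m (Some a) m' \<Longrightarrow> wstep m' s n \<Longrightarrow> wstep m (a # s) n"

definition rejects_fin :: "'a mon \<Rightarrow> 'a list \<Rightarrow> bool" where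
  "rejects_fin m s \<longleftrightarrow> wstep m s (Verd No)"

definition accepts_fin :: "'a mon \<Rightarrow> 'a list \<Rightarrow> bool" where
  "accepts_fin m s \<longleftrightarrow> wstep m s (Verd Yes)"

definition rejects :: "'a mon \<Rightarrow> 'a ftrace \<Rightarrow> bool" where
  "rejects m g \<longleftrightarrow> (\<exists>s. fprefix s g \<and> rejects_fin m s)"

definition accepts :: "'a mon \<Rightarrow> 'a ftrace \<Rightarrow> bool" where
  "accepts m g \<longleftrightarrow> (\<exists>s. fprefix s g \<and> accepts_fin m s)"

definition sound :: "'a mon \<Rightarrow> 'a form \<Rightarrow> bool" where
  "sound m p \<longleftrightarrow> (\<forall>g. (rejects m g \<longrightarrow> g \<notin> semF p) \<and> (accepts m g \<longrightarrow> g \<in> semF p))"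

definition violation_complete :: "'a mon \<Rightarrow> 'a form \<Rightarrow> bool" where
  "violation_complete m p \<longleftrightarrow> (\<forall>g. g \<notin> semF p \<longrightarrow> rejects m g)"

definition satisfaction_complete :: "'a mon \<Rightarrow> 'a form \<Rightarrow> bool" where
  "satisfaction_complete m p \<longleftrightarrow> (\<forall>g. g \<in> semF p \<longrightarrow> accepts m g)"

definition complete :: "'a mon \<Rightarrow> 'a form \<Rightarrow> bool" where
  "complete m p \<longleftrightarrow> violation_complete m p \<and> satisfaction_complete m p"

end

theory Submission
  imports Defs
begin

text \<open>The empty trace is a finfinite trace and a prefix of every trace. A complete monitor must
therefore reach a verdict on the empty prefix already, and by soundness that verdict then
applies to every trace.\<close>

lemma fprefix_Nil: "fprefix [] g"
  by (cases g) auto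

lemma accepts_FinT_Nil_iff: "accepts m (FinT []) \<longleftrightarrow> accepts_fin m []"
  by (simp add: accepts_def)

lemma rejects_FinT_Nil_iff: "rejects m (FinT []) \<longleftrightarrow> rejects_fin m []"
  by (simp add: rejects_def)

lemma accepts_if_accepts_fin_Nil: "accepts_fin m [] \<Longrightarrow> accepts m g"
  using fprefix_Nil by (auto simp: accepts_def)

lemma rejects_if_rejects_fin_Nil: "rejects_fin m [] \<Longrightarrow> rejects m g"
  using fprefix_Nil by (auto simp: rejects_def)

lemma sound_accepts_fin_Nil_semF_UNIV:
  assumes "sound m p" and "accepts_fin m []"
  shows "semF p = UNIV"
  using assms accepts_if_accepts_fin_Nil by (auto simp: sound_def)

lemma sound_rejects_fin_Nil_semF_empty:
  assumes "sound m p" and "rejects_fin m []"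
  shows "semF p = {}"
  using assms rejects_if_rejects_fin_Nil by (auto simp: sound_def)

theorem mainTheorem8:
  fixes \<phi> :: "'a::finite form" and m :: "'a mon"
  assumes "closed \<phi>" and "guarded \<phi>"
    and sound: "sound m \<phi>" and complete: "complete m \<phi>"
  shows "semF \<phi> = UNIV \<or> semF \<phi> = {}"
proof (cases "FinT [] \<in> semF \<phi>")
  case True
  with complete have "accepts_fin m []"
    by (simp add: complete_def satisfaction_complete_def flip: accepts_FinT_Nil_iff)
  with sound show ?thesis by (simp add: sound_accepts_fin_Nil_semF_UNIV)
next
  case False
  with complete have "rejects_fin m []"
    by (simp add: complete_def violation_complete_def flip: rejects_FinT_Nil_iff)
  with sound show ?thesis by (simp add: sound_rejects_fin_Nil_semF_empty)
qed

end
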